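(* Let $x_1,\dots,x_m \in \mathbb{S}^{n-1}$ be observations (unit vectors in $\mathbb{R}^n$), and consider the maximum likelihood problem of minimizing $\log\det\Sigma + \frac{n}{m}\sum_{i=1}^m \log(x_i^T\Sigma^{-1}x_i)$ over positive definite $\Sigma \in \mathbb{R}^{n\times n}$ (the ML problem for the angular central Gaussian distribution with density $p(x;\Sigma) = \frac{\Gamma(n/2)}{2\pi^{n/2}\sqrt{\det\Sigma}}(x^T\Sigma^{-1}x)^{-n/2}$ on $\mathbb{S}^{n-1}$). Consider the latent variable model in which the pair $(X,R) \in \mathbb{S}^{n-1}\times\mathbb{R}_+$ has joint density $$p(x,r;\Sigma) = \frac{r^{n-1}}{(2\pi)^{n/2}\sqrt{\det\Sigma}}\exp\!\left(-\frac{r^2}{2}x^T\Sigma^{-1}x\right),$$ with $R$ the latent (unobserved) variable, the pairs $(x_i,R_i)$ independent. Then the EM algorithm obtained from this latent variable model is equivalent to Tyler's fixed-point iteration: given the current iterate $\Sigma_k$, the EM update is $$\Sigma_{k+1} = \frac{n}{m}\sum_{i=1}^m \frac{1}{x_i^T\Sigma_k^{-1}x_i}\, x_i x_i^T .$$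
   Context: The EM algorithm for this model is defined as follows: given the current estimate $\Sigma_k$, the next estimate is $\Sigma_{k+1} = \arg\max_{\Sigma} \sum_{i=1}^m \mathbb{E}_{R_i \mid x_i, \Sigma_k}[\log p(x_i, R_i; \Sigma)]$, where the expectation is over the conditional distribution of $R_i$ given $X_i = x_i$ under the model with parameter $\Sigma_k$, and the maximization is over positive definite $\Sigma$. *)

theory Defs
  imports "HOL-Analysis.Analysis"
begin

definition pos_def :: "real^'n^'n \<Rightarrow> bool" where
  "pos_def S \<longleftrightarrow> transpose S = S \<and> (\<forall>v. v \<noteq> 0 \<longrightarrow> v \<bullet> (S *v v) > 0)"

definition lv_joint :: "real^'n^'n \<Rightarrow> real^'n \<Rightarrow> real \<Rightarrow> real" where
  "lv_joint S x r =
     r ^ (CARD('n) - 1) / ((2 * pi) powr (real CARD('n) / 2) * sqrt (det S))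
     * exp (- (r\<^sup>2 / 2) * (x \<bullet> (matrix_inv S *v x)))"

definition lv_cond :: "real^'n^'n \<Rightarrow> real^'n \<Rightarrow> real \<Rightarrow> real" where
  "lv_cond S x r = lv_joint S x r / (LINT t:{0<..}|lborel. lv_joint S x t)"

definition em_Q :: "(nat \<Rightarrow> real^'n) \<Rightarrow> nat \<Rightarrow> real^'n^'n \<Rightarrow> real^'n^'n \<Rightarrow> real" where
  "em_Q x m Sk S = (\<Sum>i<m. LINT r:{0<..}|lborel. lv_cond Sk (x i) r * ln (lv_joint S (x i) r))"

definition is_em_update :: "(nat \<Rightarrow> real^'n) \<Rightarrow> nat \<Rightarrow> real^'n^'n \<Rightarrow> real^'n^'n \<Rightarrow> bool" where
  "is_em_update x m Sk S \<longleftrightarrow>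
     pos_def S \<and> (\<forall>S'. pos_def S' \<longrightarrow> em_Q x m Sk S' \<le> em_Q x m Sk S)"

definition tyler_step :: "(nat \<Rightarrow> real^'n) \<Rightarrow> nat \<Rightarrow> real^'n^'n \<Rightarrow> real^'n^'n" where
  "tyler_step x m Sk = (real CARD('n) / real m) *\<^sub>R
     (\<Sum>i<m. (1 / (x i \<bullet> (matrix_inv Sk *v x i))) *\<^sub>R (\<chi> a b. x i $ a * x i $ b))"

end

theory Submission
  imports Defs "HOL-Probability.Distributions"
begin

text \<open>
  Given X = x, the latent radius R has density proportional to r^(n-1) exp(-a r^2/2), where
  a = x' Sk^-1 x, so that E[R^2 | x] = n / a. As log p(x, r; S) is affine in ln det S and in
  r^2 x' S^-1 x, the EM objective equals a constant minus (m/2) (ln det S + tr (S^-1 T)), with T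
  Tyler's step. If T is positive definite, write S^-1 = R R' and M = R' T R: the excess of this
  function over its value at T is tr M - n - ln det M, which is nonnegative and vanishes only for
  M = I, i.e. S = T. If T is singular, the function is unbounded below along T + e I as e tends
  to 0, so there is no EM update, and T, not being positive definite, is not one either.
\<close>

lemma inner_transpose_matrix_vector:
  fixes A :: "real^'n^'n"
  shows "u \<bullet> (transpose A *v w) = (A *v u) \<bullet> w"
  by (metis dot_lmul_matrix inner_commute transpose_matrix_vector)

lemma inner_symmetric_matrix_vector:
  fixes A :: "real^'n^'n"
  assumes "transpose A = A"
  shows "u \<bullet> (A *v w) = (A *v u) \<bullet> w"
  using inner_transpose_matrix_vector[of u A w] assms by simp

lemma trace_scaleR: "trace (c *\<^sub>R A) = c * trace (A :: real^'n^'n)"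
  by (simp add: trace_def sum_distrib_left)

lemma linear_coeff_eq_0_if_quadratic_nonpos:
  fixes c d :: real
  assumes "\<And>t. 2 * t * c + t\<^sup>2 * d \<le> 0"
  shows "c = 0"
proof -
  define s where "s = 1 / (\<bar>d\<bar> + 1)"
  have s: "0 < s" "\<bar>s * d\<bar> < 1"
    by (simp_all add: s_def abs_mult field_simps)
  then have "0 < s * (2 + s * d)"
    by (auto simp: abs_less_iff)
  moreover have "c\<^sup>2 * (s * (2 + s * d)) \<le> 0"
    using assms[of "c * s"] by (simp add: power2_eq_square algebra_simps)
  ultimately have "c\<^sup>2 \<le> 0"
    using mult_le_cancel_right_pos[of "s * (2 + s * d)" "c\<^sup>2" 0] by simp
  then show "c = 0"
    by simp
qed

section \<open>Spectral theorem for symmetric matrices\<close>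

lemma rayleigh_quotient_attains_max:
  fixes A :: "real^'n^'n"
  assumes W: "subspace W" and nontrivial: "W \<noteq> {0}"
  obtains v where "v \<in> W" "norm v = 1"
    "\<And>u. u \<in> W \<Longrightarrow> u \<bullet> (A *v u) \<le> (v \<bullet> (A *v v)) * (u \<bullet> u)"
proof -
  define f where "f u = u \<bullet> (A *v u)" for u
  let ?S = "W \<inter> sphere 0 1"
  obtain w0 where "w0 \<in> W" "w0 \<noteq> 0"
    using nontrivial subspace_0[OF W] by blast
  then have "w0 /\<^sub>R norm w0 \<in> ?S"
    using W by (simp add: subspace_scale)
  moreover have "compact ?S"
    using closed_subspace[OF W] compact_sphere by (rule closed_Int_compact)
  moreover have "continuous_on ?S f"
    unfolding f_def by (intro continuous_intros linear_continuous_on matrix_vector_mul_bounded_linear)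
  ultimately have "\<exists>v\<in>?S. \<forall>y\<in>?S. f y \<le> f v"
    by (intro continuous_attains_sup) auto
  then obtain v where v: "v \<in> W" "norm v = 1" and v_max: "\<And>y. y \<in> ?S \<Longrightarrow> f y \<le> f v"
    by auto
  have "f u \<le> f v * (u \<bullet> u)" if "u \<in> W" for u
  proof (cases "u = 0")
    case True
    then show ?thesis by (simp add: f_def)
  next
    case False
    have "f (u /\<^sub>R norm u) \<le> f v"
      using v_max[of "u /\<^sub>R norm u"] that W False by (simp add: subspace_scale)
    moreover have "f (u /\<^sub>R norm u) = f u / (u \<bullet> u)"
      using False by (simp add: f_def matrix_vector_mult_scaleR dot_square_norm field_simps power2_eq_square)
    ultimately show ?thesis
      using False by (simp add: divide_le_eq)
  qed
  then show thesis
    using that[OF v] by (simp add: f_def)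
qed

text \<open>Perturbing the maximiser v along w = A v - (v' A v) v, which is orthogonal to v, changes
  the Rayleigh quotient to first order by 2 t |w|^2, so maximality forces w = 0.\<close>

lemma symmetric_rayleigh_maximizer_is_eigenvector:
  fixes A :: "real^'n^'n"
  assumes sym: "transpose A = A" and W: "subspace W"
    and invariant: "\<And>w. w \<in> W \<Longrightarrow> A *v w \<in> W" and v: "v \<in> W" "norm v = 1"
    and v_max: "\<And>u. u \<in> W \<Longrightarrow> u \<bullet> (A *v u) \<le> (v \<bullet> (A *v v)) * (u \<bullet> u)"
  shows "A *v v = (v \<bullet> (A *v v)) *\<^sub>R v"
proof -
  define l where "l = v \<bullet> (A *v v)"
  define w where "w = A *v v - l *\<^sub>R v"
  have vv: "v \<bullet> v = 1"
    using v(2) by (simp add: dot_square_norm)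
  have Av: "A *v v = w + l *\<^sub>R v"
    by (simp add: w_def)
  have vw: "v \<bullet> w = 0"
    by (simp add: w_def l_def inner_diff_right vv)
  have "v \<bullet> (A *v w) = w \<bullet> w" "w \<bullet> (A *v v) = w \<bullet> w"
    using inner_symmetric_matrix_vector[OF sym, of v w] vw
    by (simp_all add: Av inner_add_left inner_add_right inner_commute)
  then have expand: "(v + t *\<^sub>R w) \<bullet> (A *v (v + t *\<^sub>R w)) =
      l + 2 * t * (w \<bullet> w) + t\<^sup>2 * (w \<bullet> (A *v w))" for t by (simp add: l_def matrix_vector_right_distrib matrix_vector_mult_scaleR
        inner_add_left inner_add_right power2_eq_square algebra_simps)
  have norm: "(v + t *\<^sub>R w) \<bullet> (v + t *\<^sub>R w) = 1 + t\<^sup>2 * (w \<bullet> w)" for t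
    using vw by (simp add: inner_add_left inner_add_right vv inner_commute power2_eq_square)
  have "2 * t * (w \<bullet> w) + t\<^sup>2 * (w \<bullet> (A *v w) - l * (w \<bullet> w)) \<le> 0" for t
  proof -
    have "v + t *\<^sub>R w \<in> W"
      using v(1) invariant[OF v(1)] W by (simp add: w_def subspace_add subspace_diff subspace_scale)
    then have "(v + t *\<^sub>R w) \<bullet> (A *v (v + t *\<^sub>R w)) \<le>
        l * ((v + t *\<^sub>R w) \<bullet> (v + t *\<^sub>R w))"
      unfolding l_def by (rule v_max)
    then have "l + 2 * t * (w \<bullet> w) + t\<^sup>2 * (w \<bullet> (A *v w)) \<le> l * (1 + t\<^sup>2 * (w \<bullet> w))"
      by (simp only: expand norm)
    then show ?thesis
      by (simp add: algebra_simps)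
  qed
  then have "w \<bullet> w = 0"
    by (rule linear_coeff_eq_0_if_quadratic_nonpos)
  then show ?thesis
    unfolding l_def[symmetric] using Av by simp
qed

lemma dim_inter_orthogonal_less:
  fixes v :: "real^'n"
  assumes W: "subspace W" and v: "v \<in> W" "v \<noteq> 0"
  shows "dim (W \<inter> {w. v \<bullet> w = 0}) < dim W"
proof -
  have "v \<notin> W \<inter> {w. v \<bullet> w = 0}"
    using v(2) by simp
  then have "W \<inter> {w. v \<bullet> w = 0} \<subset> W"
    using v(1) by blast
  moreover have "subspace (W \<inter> {w. v \<bullet> w = 0})"
    by (intro subspace_inter W subspace_hyperplane)
  ultimately have "span (W \<inter> {w. v \<bullet> w = 0}) \<subset> span W"
    using W by (metis span_eq_iff)
  then show ?thesis
    by (rule dim_psubset)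
qed

lemma symmetric_orthonormal_eigenvectors_span_invariant_subspace:
  fixes A :: "real^'n^'n"
  assumes sym: "transpose A = A"
  shows "subspace W \<Longrightarrow> (\<And>w. w \<in> W \<Longrightarrow> A *v w \<in> W) \<Longrightarrow>
    \<exists>B. B \<subseteq> W \<and> pairwise orthogonal B \<and> W \<subseteq> span B \<and>
      (\<forall>b\<in>B. norm b = 1 \<and> A *v b = (b \<bullet> (A *v b)) *\<^sub>R b)"
proof (induction "dim W" arbitrary: W rule: less_induct)
  case less
  show ?case
  proof (cases "W = {0}")
    case True
    then show ?thesis by (intro exI[of _ "{}"]) auto
  next
    case False
    obtain v where v: "v \<in> W" "norm v = 1"
      and v_max: "\<And>u. u \<in> W \<Longrightarrow> u \<bullet> (A *v u) \<le> (v \<bullet> (A *v v)) * (u \<bullet> u)"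
      using rayleigh_quotient_attains_max[OF less.prems(1) False] by blast
    have Av: "A *v v = (v \<bullet> (A *v v)) *\<^sub>R v"
      using symmetric_rayleigh_maximizer_is_eigenvector[OF sym less.prems v v_max] .
    have vv: "v \<bullet> v = 1"
      using v(2) by (simp add: dot_square_norm)
    define W' where "W' = W \<inter> {w. v \<bullet> w = 0}"
    have "subspace W'"
      unfolding W'_def by (intro subspace_inter less.prems(1) subspace_hyperplane)
    moreover have "A *v w \<in> W'" if "w \<in> W'" for w
    proof -
      have "v \<bullet> (A *v w) = (v \<bullet> (A *v v)) * (v \<bullet> w)"
        using inner_symmetric_matrix_vector[OF sym, of v w] Av by (metis inner_scaleR_left)
      then show ?thesis
        using that less.prems(2) by (simp add: W'_def)
    qed
    moreover have "dim W' < dim W"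
      unfolding W'_def using less.prems(1) v by (intro dim_inter_orthogonal_less) auto
    ultimately obtain B' where B': "B' \<subseteq> W'" "pairwise orthogonal B'" "W' \<subseteq> span B'"
      and B'_eigen: "\<forall>b\<in>B'. norm b = 1 \<and> A *v b = (b \<bullet> (A *v b)) *\<^sub>R b"
      using less.hyps by blast
    have "W \<subseteq> span (insert v B')"
    proof
      fix w assume "w \<in> W"
      then have "w - (v \<bullet> w) *\<^sub>R v \<in> W'"
        using v(1) less.prems(1) vv
        by (simp add: W'_def subspace_diff subspace_scale inner_diff_right)
      then have "w - (v \<bullet> w) *\<^sub>R v \<in> span (insert v B')"
        using B'(3) span_mono[of B' "insert v B'"] by auto
      then show "w \<in> span (insert v B')"
        by (metis diff_add_cancel insertI1 span_add span_base span_scale)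
    qed
    moreover have "pairwise orthogonal (insert v B')"
      using B'(1,2) by (auto simp: pairwise_insert W'_def orthogonal_def inner_commute)
    ultimately show ?thesis
      using B'(1) B'_eigen v Av by (intro exI[of _ "insert v B'"]) (auto simp: W'_def)
  qed
qed

lemma symmetric_matrix_orthogonal_eigenbasis:
  fixes A :: "real^'n^'n"
  assumes "transpose A = A"
  obtains U :: "real^'n^'n" and d :: "real^'n"
  where "orthogonal_matrix U" "\<And>j. A *v column j U = d $ j *\<^sub>R column j U"
proof -
  obtain B where B_orth: "pairwise orthogonal B" and B_span: "UNIV \<subseteq> span B"
    and B_eigen: "\<And>b. b \<in> B \<Longrightarrow> norm b = 1 \<and> A *v b = (b \<bullet> (A *v b)) *\<^sub>R b"
    using symmetric_orthonormal_eigenvectors_span_invariant_subspace[OF assms, of UNIV] by auto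
  have "independent B"
    using B_orth B_eigen pairwise_orthogonal_independent by fastforce
  then have "finite B" "card B = CARD('n)"
    using B_span dim_eq_card_independent[of B] dim_span[of B]
    by (auto simp: independent_bound top.extremum_unique)
  then obtain f where f: "bij_betw f (UNIV :: 'n set) B"
    using bij_betw_iff_card[of "UNIV :: 'n set" B] by auto
  define U :: "real^'n^'n" where "U = (\<chi> i j. f j $ i)"
  have column_U: "column j U = f j" for j
    by (simp add: U_def column_def vec_eq_iff)
  have f_B: "f j \<in> B" for j
    using f by (auto simp: bij_betw_def)
  have "orthogonal (f i) (f j)" if "i \<noteq> j" for i j
  proof -
    have "f i \<noteq> f j"
      using f that by (metis bij_betw_imp_inj_on inj_eq)
    then show ?thesis
      using B_orth f_B by (simp add: pairwise_def)
  qed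
  then have "orthogonal_matrix U"
    using B_eigen f_B by (simp add: orthogonal_matrix_orthonormal_columns column_U)
  moreover have "A *v column j U = (\<chi> j. f j \<bullet> (A *v f j)) $ j *\<^sub>R column j U" for j
    using B_eigen f_B by (simp add: column_U)
  ultimately show thesis
    by (rule that)
qed

definition diag_mat :: "real^'n \<Rightarrow> real^'n^'n" where
  "diag_mat d = (\<chi> i j. if i = j then d $ i else 0)"

lemma orthogonal_eigenbasis_diagonalizes:
  fixes A U :: "real^'n^'n"
  assumes U: "orthogonal_matrix U" and eigen: "\<And>j. A *v column j U = d $ j *\<^sub>R column j U"
  shows "A = U ** diag_mat d ** transpose U"
proof -
  have "(A ** U) $ i $ j = (U ** diag_mat d) $ i $ j" for i j
  proof -
    have "(A ** U) $ i $ j = (A *v column j U) $ i"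
      by (simp add: matrix_matrix_mult_def matrix_vector_mult_def column_def)
    also have "\<dots> = d $ j * U $ i $ j"
      unfolding eigen by (simp add: column_def)
    also have "\<dots> = (U ** diag_mat d) $ i $ j"
      by (simp add: matrix_matrix_mult_def diag_mat_def if_distrib cong: if_cong)
    finally show ?thesis .
  qed
  then have "A ** U = U ** diag_mat d"
    by (simp add: vec_eq_iff)
  have "A = A ** (U ** transpose U)"
    using U by (simp add: orthogonal_matrix_def)
  also have "\<dots> = U ** diag_mat d ** transpose U"
    using \<open>A ** U = U ** diag_mat d\<close> by (simp add: matrix_mul_assoc)
  finally show ?thesis .
qed

lemma transpose_diag_mat: "transpose (diag_mat d) = diag_mat d"
  by (simp add: vec_eq_iff transpose_def diag_mat_def)

lemma diag_mat_mult: "diag_mat a ** diag_mat b = diag_mat (\<chi> i. a $ i * b $ i)"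
proof -
  have "(diag_mat a ** diag_mat b) $ i $ j =
      (\<Sum>k\<in>UNIV. if k = i then (if i = j then a $ i * b $ i else 0) else 0)" for i j
    unfolding matrix_matrix_mult_def diag_mat_def vec_lambda_beta by (intro sum.cong) auto
  then show ?thesis
    by (simp add: vec_eq_iff diag_mat_def)
qed

lemma det_orthogonal_conj_diag_mat:
  assumes "orthogonal_matrix U"
  shows "det (U ** diag_mat d ** transpose U) = (\<Prod>i\<in>UNIV. d $ i)"
proof -
  have "det (diag_mat d) = (\<Prod>i\<in>UNIV. d $ i)"
    by (subst det_diagonal) (auto simp: diag_mat_def)
  then show ?thesis
    using det_orthogonal_matrix[OF assms] by (auto simp: det_mul)
qed

lemma trace_orthogonal_conj_diag_mat:
  assumes "orthogonal_matrix U"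
  shows "trace (U ** diag_mat d ** transpose U) = (\<Sum>i\<in>UNIV. d $ i)"
proof -
  have "trace (U ** diag_mat d ** transpose U) = trace (diag_mat d ** transpose U ** U)"
    by (metis matrix_mul_assoc trace_mul_sym)
  also have "\<dots> = trace (diag_mat d)"
    using assms unfolding orthogonal_matrix_def by (simp only: matrix_mul_assoc[symmetric] matrix_mul_rid)
  finally show ?thesis
    by (simp add: trace_def diag_mat_def)
qed

lemma pos_def_diagonalizable:
  fixes A :: "real^'n^'n"
  assumes "pos_def A"
  obtains U d where "orthogonal_matrix U" "A = U ** diag_mat d ** transpose U" "\<And>j. 0 < d $ j"
proof -
  obtain U d where U: "orthogonal_matrix U" and eigen: "\<And>j. A *v column j U = d $ j *\<^sub>R column j U"
    using symmetric_matrix_orthogonal_eigenbasis assms unfolding pos_def_def by blast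
  have "0 < d $ j" for j
  proof -
    have unit: "norm (column j U) = 1"
      using U by (simp add: orthogonal_matrix_orthonormal_columns)
    then have "column j U \<noteq> 0"
      by auto
    then have "0 < column j U \<bullet> (A *v column j U)"
      using assms by (simp add: pos_def_def)
    also have "\<dots> = d $ j"
      using unit by (simp add: eigen dot_square_norm)
    finally show ?thesis .
  qed
  then show thesis
    using that U orthogonal_eigenbasis_diagonalizes[OF U eigen] by blast
qed

lemma pos_def_det_pos:
  fixes A :: "real^'n^'n"
  assumes "pos_def A"
  shows "0 < det A"
proof -
  obtain U d where "orthogonal_matrix U" "A = U ** diag_mat d ** transpose U" "\<And>j. 0 < d $ j"
    using pos_def_diagonalizable[OF assms] by blast
  then show ?thesis
    by (simp add: det_orthogonal_conj_diag_mat prod_pos)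
qed

lemma pos_def_invertible:
  fixes A :: "real^'n^'n"
  assumes "pos_def A"
  shows "invertible A"
  using pos_def_det_pos[OF assms] by (simp add: invertible_det_nz)

lemma pos_def_trace_pos:
  fixes A :: "real^'n^'n"
  assumes "pos_def A"
  shows "0 < trace A"
proof -
  obtain U d where "orthogonal_matrix U" "A = U ** diag_mat d ** transpose U" "\<And>j. 0 < d $ j"
    using pos_def_diagonalizable[OF assms] by blast
  then show ?thesis
    by (simp add: trace_orthogonal_conj_diag_mat sum_pos)
qed

lemma
  fixes A :: "real^'n^'n"
  assumes "invertible A"
  shows matrix_inv_right: "A ** matrix_inv A = mat 1"
    and matrix_inv_left: "matrix_inv A ** A = mat 1"
proof -
  have "\<exists>A'. A ** A' = mat 1 \<and> A' ** A = mat 1"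
    using assms by (simp add: invertible_def)
  then have "A ** matrix_inv A = mat 1 \<and> matrix_inv A ** A = mat 1"
    unfolding matrix_inv_def by (rule someI_ex)
  then show "A ** matrix_inv A = mat 1" "matrix_inv A ** A = mat 1"
    by auto
qed

lemma det_matrix_inv:
  fixes A :: "real^'n^'n"
  assumes "invertible A"
  shows "det (matrix_inv A) = 1 / det A"
proof -
  have "det A * det (matrix_inv A) = 1"
    using matrix_inv_right[OF assms] by (metis det_I det_mul)
  moreover have "det A \<noteq> 0"
    using assms invertible_det_nz by blast
  ultimately show ?thesis
    by (simp add: field_simps)
qed

lemma pos_def_matrix_inv:
  fixes S :: "real^'n^'n"
  assumes S: "pos_def S"
  shows "pos_def (matrix_inv S)"
proof -
  let ?P = "matrix_inv S"
  have SP: "S ** ?P = mat 1"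
    by (rule matrix_inv_right[OF pos_def_invertible[OF S]])
  have sym: "transpose S = S"
    using S by (simp add: pos_def_def)
  have "transpose ?P ** S = mat 1"
    by (metis SP matrix_transpose_mul sym transpose_mat)
  then have "transpose ?P = ?P"
    by (metis SP matrix_mul_assoc matrix_mul_lid matrix_mul_rid)
  moreover have "0 < v \<bullet> (?P *v v)" if "v \<noteq> 0" for v
  proof -
    have "S *v (?P *v v) = v"
      by (simp add: matrix_vector_mul_assoc SP)
    then have "0 < (?P *v v) \<bullet> (S *v (?P *v v))"
      using S that by (metis matrix_vector_mult_0_right pos_def_def)
    then show ?thesis
      using \<open>S *v (?P *v v) = v\<close> by (simp add: inner_commute)
  qed
  ultimately show ?thesis
    by (simp add: pos_def_def)
qed

lemma pos_def_eq_mult_transpose: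
  fixes P :: "real^'n^'n"
  assumes "pos_def P"
  obtains R :: "real^'n^'n" where "invertible R" "P = R ** transpose R"
proof -
  obtain U d where U: "orthogonal_matrix U" and P: "P = U ** diag_mat d ** transpose U"
    and d: "\<And>j. 0 < d $ j"
    using pos_def_diagonalizable[OF assms] by blast
  define E where "E = diag_mat (\<chi> i. sqrt (d $ i))"
  define R where "R = U ** E"
  have "R ** transpose R = U ** (E ** transpose E) ** transpose U"
    by (simp add: R_def matrix_transpose_mul matrix_mul_assoc)
  also have "E ** transpose E = diag_mat d"
    using d by (simp add: E_def transpose_diag_mat diag_mat_mult vec_eq_iff less_imp_le)
  finally have "P = R ** transpose R"
    by (simp add: P)
  moreover have "det R \<noteq> 0"
    using d[THEN less_imp_neq] det_orthogonal_matrix[OF U]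
    by (auto simp: R_def E_def det_mul det_diagonal diag_mat_def)
  ultimately show thesis
    using that by (simp add: invertible_det_nz)
qed

lemma pos_def_congruence:
  fixes R T :: "real^'n^'n"
  assumes R: "invertible R" and T: "pos_def T"
  shows "pos_def (transpose R ** T ** R)"
proof -
  have "transpose (transpose R ** T ** R) = transpose R ** T ** R"
    using T by (simp add: pos_def_def matrix_transpose_mul matrix_mul_assoc)
  moreover have "0 < v \<bullet> ((transpose R ** T ** R) *v v)" if "v \<noteq> 0" for v
  proof -
    have "R *v v \<noteq> 0"
      using that inj_matrix_vector_mult[OF R] by (metis injD matrix_vector_mult_0_right)
    then have "0 < (R *v v) \<bullet> (T *v (R *v v))"
      using T by (simp add: pos_def_def)
    moreover have "v \<bullet> ((transpose R ** T ** R) *v v) = (R *v v) \<bullet> (T *v (R *v v))"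
      by (simp only: matrix_vector_mul_assoc[symmetric] inner_transpose_matrix_vector)
    ultimately show ?thesis
      by simp
  qed
  ultimately show ?thesis
    by (simp add: pos_def_def)
qed

lemma ln_det_le_trace:
  fixes M :: "real^'n^'n"
  assumes "pos_def M"
  shows "ln (det M) \<le> trace M - real CARD('n)"
    and "ln (det M) = trace M - real CARD('n) \<Longrightarrow> M = mat 1"
proof -
  obtain U d where U: "orthogonal_matrix U" and M: "M = U ** diag_mat d ** transpose U"
    and d: "\<And>j. 0 < d $ j"
    using pos_def_diagonalizable[OF assms] by blast
  have ln_det: "ln (det M) = (\<Sum>i\<in>UNIV. ln (d $ i))"
    using d by (simp add: M det_orthogonal_conj_diag_mat[OF U] ln_prod less_imp_neq[symmetric])
  have trace: "trace M - real CARD('n) = (\<Sum>i\<in>UNIV. d $ i - 1)"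
    by (simp add: M trace_orthogonal_conj_diag_mat[OF U] sum_subtractf)
  have each: "ln (d $ i) \<le> d $ i - 1" for i
    using d by (rule ln_le_minus_one)
  show "ln (det M) \<le> trace M - real CARD('n)"
    unfolding ln_det trace by (intro sum_mono each)
  assume "ln (det M) = trace M - real CARD('n)"
  then have "(\<Sum>i\<in>UNIV. (d $ i - 1) - ln (d $ i)) = 0"
    unfolding ln_det trace by (simp add: sum_subtractf)
  then have "(d $ i - 1) - ln (d $ i) = 0" for i
    using each by (subst (asm) sum_nonneg_eq_0_iff) auto
  then have "d $ i = 1" for i
    using d ln_eq_minus_one by force
  then have "diag_mat d = mat 1"
    by (simp add: vec_eq_iff diag_mat_def mat_def)
  then show "M = mat 1"
    using U by (simp add: M orthogonal_matrix_def)
qed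

definition pos_semidef :: "real^'n^'n \<Rightarrow> bool" where
  "pos_semidef S \<longleftrightarrow> transpose S = S \<and> (\<forall>v. 0 \<le> v \<bullet> (S *v v))"

lemma pos_def_imp_pos_semidef:
  "pos_def S \<Longrightarrow> pos_semidef S"
  unfolding pos_def_def pos_semidef_def by (metis inner_zero_left less_eq_real_def)

lemma pos_semidef_mult_vec_eq_0:
  fixes T :: "real^'n^'n"
  assumes T: "pos_semidef T" and v: "v \<bullet> (T *v v) = 0"
  shows "T *v v = 0"
proof -
  have sym: "transpose T = T"
    using T by (simp add: pos_semidef_def)
  have "2 * t * - (w \<bullet> (T *v v)) + t\<^sup>2 * - (w \<bullet> (T *v w)) \<le> 0" for t w
  proof -
    have "0 \<le> (v + t *\<^sub>R w) \<bullet> (T *v (v + t *\<^sub>R w))"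
      using T by (simp add: pos_semidef_def)
    moreover have "v \<bullet> (T *v w) = w \<bullet> (T *v v)"
      using inner_symmetric_matrix_vector[OF sym, of v w] by (simp add: inner_commute)
    ultimately show ?thesis
      using v by (simp add: matrix_vector_right_distrib matrix_vector_mult_scaleR
          inner_add_left inner_add_right power2_eq_square algebra_simps)
  qed
  then have "(T *v v) \<bullet> (T *v v) = 0"
    using linear_coeff_eq_0_if_quadratic_nonpos by (metis neg_equal_0_iff_equal)
  then show ?thesis
    by simp
qed

lemma det_eq_0_if_pos_semidef_not_pos_def:
  fixes T :: "real^'n^'n"
  assumes T: "pos_semidef T" and "\<not> pos_def T"
  shows "det T = 0"
proof -
  obtain v where "v \<noteq> 0" "v \<bullet> (T *v v) \<le> 0"
    using assms by (auto simp: pos_def_def pos_semidef_def not_less)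
  then have "v \<noteq> 0" "T *v v = 0"
    using T pos_semidef_mult_vec_eq_0 by (auto simp: pos_semidef_def intro: antisym)
  then show ?thesis
    by (metis inj_matrix_vector_mult injD invertible_det_nz matrix_vector_mult_0_right)
qed

lemma pos_semidef_add_scaleR_mat_1:
  fixes T :: "real^'n^'n"
  assumes T: "pos_semidef T" and e: "0 < e"
  shows "pos_def (T + e *\<^sub>R mat 1)"
proof -
  have "transpose (T + e *\<^sub>R mat 1) = T + e *\<^sub>R mat 1"
    using T by (simp add: pos_semidef_def vec_eq_iff transpose_def mat_def)
  moreover have "0 < w \<bullet> ((T + e *\<^sub>R mat 1) *v w)" if "w \<noteq> 0" for w
  proof -
    have "w \<bullet> ((T + e *\<^sub>R mat 1) *v w) = w \<bullet> (T *v w) + e * (w \<bullet> w)"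
      by (simp add: matrix_vector_mult_add_rdistrib scaleR_matrix_vector_assoc[symmetric]
          inner_add_right)
    then show ?thesis
      using T e that by (simp add: pos_semidef_def add_nonneg_pos)
  qed
  ultimately show ?thesis
    by (simp add: pos_def_def)
qed

section \<open>The Gaussian negative log-likelihood\<close>

text \<open>For a sample covariance T, this is up to a positive factor and an additive constant the
  negative log-likelihood of a centred Gaussian with covariance S.\<close>

definition gaussian_nll :: "real^'n^'n \<Rightarrow> real^'n^'n \<Rightarrow> real" where
  "gaussian_nll T S = ln (det S) + trace (matrix_inv S ** T)"

lemma gaussian_nll_self:
  fixes T :: "real^'n^'n"
  assumes "pos_def T"
  shows "gaussian_nll T T = ln (det T) + real CARD('n)"
  using matrix_inv_left[OF pos_def_invertible[OF assms]] by (simp add: gaussian_nll_def trace_I)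

lemma gaussian_nll_minimum:
  fixes T S :: "real^'n^'n"
  assumes T: "pos_def T" and S: "pos_def S"
  shows "gaussian_nll T T \<le> gaussian_nll T S"
    and "gaussian_nll T S = gaussian_nll T T \<Longrightarrow> S = T"
proof -
  obtain R :: "real^'n^'n" where R: "invertible R" and S_inv: "matrix_inv S = R ** transpose R"
    using pos_def_eq_mult_transpose[OF pos_def_matrix_inv[OF S]] by blast
  define M where "M = transpose R ** T ** R"
  have M: "pos_def M"
    unfolding M_def using R T by (rule pos_def_congruence)
  have "trace M = trace (transpose R ** (T ** R))"
    by (simp only: M_def matrix_mul_assoc)
  also have "\<dots> = trace (T ** R ** transpose R)"
    by (rule trace_mul_sym)
  also have "\<dots> = trace (T ** matrix_inv S)"
    by (simp only: S_inv matrix_mul_assoc)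
  also have "\<dots> = trace (matrix_inv S ** T)"
    by (rule trace_mul_sym)
  finally have trace_M: "trace M = trace (matrix_inv S ** T)" .
  have "det M = det (matrix_inv S) * det T"
    by (simp add: M_def S_inv det_mul)
  also have "\<dots> = det T / det S"
    by (simp add: det_matrix_inv[OF pos_def_invertible[OF S]])
  finally have "ln (det M) = ln (det T) - ln (det S)"
    using pos_def_det_pos[OF S] pos_def_det_pos[OF T] by (simp add: ln_div)
  then have excess: "gaussian_nll T S - gaussian_nll T T = trace M - real CARD('n) - ln (det M)"
    unfolding gaussian_nll_self[OF T] by (simp add: gaussian_nll_def trace_M)
  then show "gaussian_nll T T \<le> gaussian_nll T S"
    using ln_det_le_trace(1)[OF M] by simp
  assume "gaussian_nll T S = gaussian_nll T T"
  then have "M = mat 1"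
    using excess ln_det_le_trace(2)[OF M] by simp
  then have "transpose R ** (T ** R) = mat 1"
    by (simp only: M_def matrix_mul_assoc)
  then have "T ** R ** transpose R = mat 1"
    using matrix_left_right_inverse[of "transpose R" "T ** R"] by simp
  then have "T ** matrix_inv S = mat 1"
    by (simp only: S_inv matrix_mul_assoc)
  then have "S = T ** (matrix_inv S ** S)"
    by (simp add: matrix_mul_assoc)
  then show "S = T"
    by (simp add: matrix_inv_left[OF pos_def_invertible[OF S]])
qed

lemma gaussian_nll_shifted_le:
  fixes T :: "real^'n^'n"
  assumes T: "pos_semidef T" and e: "0 < e"
  shows "gaussian_nll T (T + e *\<^sub>R mat 1) \<le> ln (det (T + e *\<^sub>R mat 1)) + real CARD('n)"
proof -
  let ?P = "matrix_inv (T + e *\<^sub>R mat 1)"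
  have pd: "pos_def (T + e *\<^sub>R mat 1)"
    using T e by (rule pos_semidef_add_scaleR_mat_1)
  have "?P ** T + e *\<^sub>R ?P = mat 1"
    using matrix_inv_left[OF pos_def_invertible[OF pd]]
    by (simp add: matrix_add_ldistrib matrix_scalar_ac)
  then have "trace (?P ** T) + e * trace ?P = real CARD('n)"
    by (metis trace_add trace_I trace_scaleR)
  moreover have "0 < e * trace ?P"
    using e pos_def_trace_pos[OF pos_def_matrix_inv[OF pd]] by simp
  ultimately show ?thesis
    using e by (simp add: gaussian_nll_def)
qed

lemma gaussian_nll_unbounded_below:
  fixes T :: "real^'n^'n"
  assumes T: "pos_semidef T" and "\<not> pos_def T"
  shows "\<exists>S. pos_def S \<and> gaussian_nll T S < c"
proof -
  have "isCont (\<lambda>e::real. det (T + e *\<^sub>R mat 1)) 0"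
    unfolding det_def by (simp add: mat_def) (intro continuous_intros)
  then have "((\<lambda>e. det (T + e *\<^sub>R mat 1)) \<longlongrightarrow> det T) (at_right 0)"
    unfolding isCont_def by (auto intro: tendsto_mono[OF at_le[OF subset_UNIV]])
  then have "\<forall>\<^sub>F e in at_right 0. det (T + e *\<^sub>R mat 1) < exp (c - real CARD('n))"
    using det_eq_0_if_pos_semidef_not_pos_def[OF assms] by (simp add: order_tendstoD(2))
  moreover have "\<forall>\<^sub>F e in at_right (0::real). 0 < e"
    by (simp add: eventually_at_right_less)
  ultimately have "\<forall>\<^sub>F e in at_right 0. 0 < e \<and> det (T + e *\<^sub>R mat 1) < exp (c - real CARD('n))"
    by (rule eventually_conj[rotated])
  then obtain e where e: "0 < e" "det (T + e *\<^sub>R mat 1) < exp (c - real CARD('n))"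
    using eventually_happens'[OF trivial_limit_at_right_real] by blast
  have "0 < det (T + e *\<^sub>R mat 1)"
    using pos_def_det_pos[OF pos_semidef_add_scaleR_mat_1[OF T e(1)]] .
  then have "ln (det (T + e *\<^sub>R mat 1)) < c - real CARD('n)"
    using e(2) by (metis ln_exp ln_less_cancel_iff exp_gt_zero)
  then show ?thesis
    using gaussian_nll_shifted_le[OF T e(1)] pos_semidef_add_scaleR_mat_1[OF T e(1)] by force
qed

lemma gaussian_nll_minimizer_iff:
  fixes T S :: "real^'n^'n"
  assumes T: "pos_semidef T" and S: "pos_def S"
  shows "(\<forall>S'. pos_def S' \<longrightarrow> gaussian_nll T S \<le> gaussian_nll T S') \<longleftrightarrow> S = T"
proof (cases "pos_def T")
  case True
  then show ?thesis
    using S gaussian_nll_minimum[OF True] by (auto intro: order_antisym)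
next
  case False
  then show ?thesis
    using S gaussian_nll_unbounded_below[OF T False, of "gaussian_nll T S"] by force
qed

definition outer_prod :: "real^'n \<Rightarrow> real^'n^'n" where
  "outer_prod y = (\<chi> a b. y $ a * y $ b)"

lemma outer_prod_mult_vec: "outer_prod y *v v = (y \<bullet> v) *\<^sub>R y"
  by (simp add: outer_prod_def vec_eq_iff matrix_vector_mult_def inner_vec_def
      sum_distrib_left sum_distrib_right mult_ac)

lemma trace_mult_outer_prod: "trace (P ** outer_prod y) = y \<bullet> (P *v y)"
  by (simp add: outer_prod_def trace_def matrix_matrix_mult_def inner_vec_def
      matrix_vector_mult_def sum_distrib_left mult_ac)

lemma sum_matrix_mult_vec: "sum f I *v v = (\<Sum>i\<in>I. f i *v v)"
  for f :: "'i \<Rightarrow> real^'n^'m"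
  by (induction I rule: infinite_finite_induct) (simp_all add: matrix_vector_mult_add_rdistrib)

lemma trace_mult_sum: "trace (P ** sum f I) = (\<Sum>i\<in>I. trace (P ** f i))"
  for P :: "real^'n^'n"
  by (induction I rule: infinite_finite_induct)
    (simp_all add: matrix_add_ldistrib trace_add trace_0[simplified])

lemma trace_mult_scaleR: "trace (P ** (c *\<^sub>R A)) = c * trace (P ** A)"
  for P A :: "real^'n^'n"
  by (simp add: matrix_scalar_ac scalar_matrix_assoc[symmetric] trace_scaleR)

lemma pos_semidef_weighted_outer_sum:
  fixes y :: "'i \<Rightarrow> real^'n"
  assumes "\<And>i. i \<in> I \<Longrightarrow> 0 \<le> w i"
  shows "pos_semidef (\<Sum>i\<in>I. w i *\<^sub>R outer_prod (y i))"
proof -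
  have "transpose (\<Sum>i\<in>I. w i *\<^sub>R outer_prod (y i)) = (\<Sum>i\<in>I. w i *\<^sub>R outer_prod (y i))"
    by (simp add: vec_eq_iff transpose_def sum_component outer_prod_def mult.commute)
  moreover have "v \<bullet> ((\<Sum>i\<in>I. w i *\<^sub>R outer_prod (y i)) *v v) =
      (\<Sum>i\<in>I. w i * (y i \<bullet> v)\<^sup>2)" for v
    by (simp add: sum_matrix_mult_vec scaleR_matrix_vector_assoc[symmetric] outer_prod_mult_vec
        inner_sum_right power2_eq_square inner_commute mult.assoc)
  moreover have "0 \<le> (\<Sum>i\<in>I. w i * (y i \<bullet> v)\<^sup>2)" for v
    using assms by (simp add: sum_nonneg)
  ultimately show ?thesis
    by (simp add: pos_semidef_def)
qed

lemma tyler_step_eq_sum: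
  fixes x :: "nat \<Rightarrow> real^'n"
  shows "tyler_step x m Sk =
    (\<Sum>i<m. (real CARD('n) / real m / (x i \<bullet> (matrix_inv Sk *v x i))) *\<^sub>R outer_prod (x i))"
  by (simp add: tyler_step_def outer_prod_def scaleR_sum_right)

lemma pos_semidef_tyler_step:
  fixes Sk :: "real^'n^'n"
  assumes "pos_def Sk"
  shows "pos_semidef (tyler_step x m Sk)"
  unfolding tyler_step_eq_sum
  using pos_def_imp_pos_semidef[OF pos_def_matrix_inv[OF assms]]
  by (intro pos_semidef_weighted_outer_sum) (simp add: pos_semidef_def)

lemma trace_mult_tyler_step:
  fixes x :: "nat \<Rightarrow> real^'n"
  shows "trace (P ** tyler_step x m Sk) =
    (\<Sum>i<m. real CARD('n) / real m / (x i \<bullet> (matrix_inv Sk *v x i)) * (x i \<bullet> (P *v x i)))"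
  by (simp add: tyler_step_eq_sum trace_mult_sum trace_mult_scaleR trace_mult_outer_prod)

section \<open>Radial moments of the Gaussian\<close>

definition half_gaussian_moment :: "nat \<Rightarrow> real" where
  "half_gaussian_moment k =
     (if even k then sqrt pi / 2 * (fact k / (2 ^ k * fact (k div 2))) else fact (k div 2) / 2)"

lemma has_bochner_integral_half_gaussian_moment:
  "has_bochner_integral lborel (\<lambda>x::real. indicator {0..} x *\<^sub>R (exp (- x\<^sup>2) * x ^ k))
     (half_gaussian_moment k)"
proof (cases "even k")
  case True
  then obtain j where "k = 2 * j"
    by (auto elim: evenE)
  then show ?thesis
    using gaussian_moment_even_pos[of j] by (simp add: half_gaussian_moment_def)
next
  case False
  then obtain j where "k = 2 * j + 1"
    by (auto elim: oddE)
  then show ?thesis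
    using gaussian_moment_odd_pos[of j] by (simp add: half_gaussian_moment_def)
qed

lemma half_gaussian_moment_pos: "0 < half_gaussian_moment k"
  by (simp add: half_gaussian_moment_def)

lemma half_gaussian_moment_add_2:
  "half_gaussian_moment (k + 2) = (real k + 1) / 2 * half_gaussian_moment k"
proof (cases "even k")
  case True
  then obtain j where k: "k = 2 * j"
    by (auto elim: evenE)
  have "fact (2 * j + 2) = 2 * (real j + 1) * (2 * real j + 1) * (fact (2 * j) :: real)"
    by (simp add: numeral_2_eq_2 algebra_simps)
  moreover have "fact (j + 1) = (real j + 1) * (fact j :: real)"
    by simp
  moreover have "(2 * j + 2) div 2 = j + 1" "(2::real) ^ (2 * j + 2) = 4 * 2 ^ (2 * j)"
    by simp_all
  ultimately show ?thesis
    by (simp add: half_gaussian_moment_def k divide_simps) (simp add: algebra_simps)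
next
  case False
  then obtain j where k: "k = 2 * j + 1"
    by (auto elim: oddE)
  have "(2 * j + 1 + 2) div 2 = j + 1"
    by simp
  then show ?thesis
    by (simp add: half_gaussian_moment_def k field_simps)
qed

definition radial_moment :: "real \<Rightarrow> nat \<Rightarrow> real" where
  "radial_moment a k = sqrt (2 / a) ^ (k + 1) * half_gaussian_moment k"

lemma radial_moment_pos: "0 < a \<Longrightarrow> 0 < radial_moment a k"
  by (simp add: radial_moment_def half_gaussian_moment_pos)

lemma radial_moment_add_2:
  assumes "0 < a"
  shows "radial_moment a (k + 2) = (real k + 1) / a * radial_moment a k"
proof -
  have "sqrt (2 / a) ^ (k + 2 + 1) = sqrt (2 / a) ^ 2 * sqrt (2 / a) ^ (k + 1)"
    by (simp flip: power_add)
  also have "sqrt (2 / a) ^ 2 = 2 / a"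
    using assms by simp
  finally show ?thesis
    using assms half_gaussian_moment_add_2[of k] by (simp add: radial_moment_def)
qed

lemma has_bochner_integral_radial_moment:
  assumes a: "0 < a"
  shows "has_bochner_integral lborel
    (\<lambda>r::real. indicator {0<..} r *\<^sub>R (r ^ k * exp (- (r\<^sup>2 / 2) * a))) (radial_moment a k)"
proof -
  define c where "c = sqrt (2 / a)"
  have c: "0 < c" "c\<^sup>2 = 2 / a"
    using a by (simp_all add: c_def)
  \<comment> \<open>substitute r = c x in the half Gaussian moment\<close>
  have "has_bochner_integral lborel
      (\<lambda>r. (\<lambda>x. indicator {0..} x *\<^sub>R (exp (- x\<^sup>2) * x ^ k)) (0 + (1 / c) * r))
      (half_gaussian_moment k /\<^sub>R \<bar>1 / c\<bar>)"
    using has_bochner_integral_half_gaussian_moment[of k] c(1)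
    by (subst (asm) lborel_has_bochner_integral_real_affine_iff[where c = "1 / c" and t = 0]) auto
  then have "has_bochner_integral lborel
      (\<lambda>r. c ^ k * (indicator {0..} (r / c) *\<^sub>R (exp (- (r / c)\<^sup>2) * (r / c) ^ k)))
      (c ^ k * (c * half_gaussian_moment k))"
    using c(1) by (intro has_bochner_integral_mult_right) simp
  moreover have "c ^ k * (c * half_gaussian_moment k) = radial_moment a k"
    by (simp add: radial_moment_def c_def)
  ultimately have scaled: "has_bochner_integral lborel
      (\<lambda>r. c ^ k * (indicator {0..} (r / c) *\<^sub>R (exp (- (r / c)\<^sup>2) * (r / c) ^ k))) (radial_moment a k)"
    by simp
  have ae: "AE r in lborel. c ^ k * (indicator {0..} (r / c) *\<^sub>R (exp (- (r / c)\<^sup>2) * (r / c) ^ k)) =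
      indicator {0<..} r *\<^sub>R (r ^ k * exp (- (r\<^sup>2 / 2) * a))"
    using AE_lborel_singleton[of 0]
  proof eventually_elim
    case (elim r)
    have "(r / c)\<^sup>2 = r\<^sup>2 / 2 * a"
      using a c by (simp add: power_divide)
    moreover have "indicator {0..} (r / c) = (indicator {0<..} r :: real)"
      using elim c by (auto simp: indicator_def field_simps)
    ultimately show ?case
      using c by (simp add: power_divide)
  qed
  show ?thesis
    by (rule has_bochner_integral_cong_AE[THEN iffD1, OF _ _ ae scaled]) measurable
qed

lemma abs_power_mult_ln_le:
  fixes r :: real
  assumes r: "0 < r"
  shows "\<bar>r ^ Suc k * ln r\<bar> \<le> r ^ k + r ^ (k + 2)"
proof -
  have "ln r \<le> r" "- ln r \<le> 1 / r"
    using ln_le_minus_one[OF r] ln_le_minus_one[of "1 / r"] r by (simp_all add: ln_div)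
  moreover have "0 < 1 / r"
    using r by simp
  ultimately have "\<bar>ln r\<bar> \<le> 1 / r + r"
    using r unfolding abs_le_iff by linarith
  then have "r ^ Suc k * \<bar>ln r\<bar> \<le> r ^ Suc k * (1 / r + r)"
    using r by (intro mult_left_mono) auto
  then show ?thesis
    using r by (simp add: abs_mult distrib_left power_add power2_eq_square ac_simps)
qed

lemma integrable_radial_log_moment:
  assumes a: "0 < a"
  shows "integrable lborel
    (\<lambda>r::real. indicator {0<..} r *\<^sub>R (r ^ Suc k * ln r * exp (- (r\<^sup>2 / 2) * a)))"
proof (rule Bochner_Integration.integrable_bound)
  let ?e = "\<lambda>r::real. exp (- (r\<^sup>2 / 2) * a)"
  show "integrable lborel
      (\<lambda>r. indicator {0<..} r *\<^sub>R (r ^ k * ?e r) + indicator {0<..} r *\<^sub>R (r ^ (k + 2) * ?e r))"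
    using has_bochner_integral_radial_moment[OF a]
    by (intro Bochner_Integration.integrable_add integrable.intros)
  show "AE r in lborel. norm (indicator {0<..} r *\<^sub>R (r ^ Suc k * ln r * ?e r))
      \<le> norm (indicator {0<..} r *\<^sub>R (r ^ k * ?e r) + indicator {0<..} r *\<^sub>R (r ^ (k + 2) * ?e r))"
  proof (rule AE_I2)
    fix r :: real
    show "norm (indicator {0<..} r *\<^sub>R (r ^ Suc k * ln r * ?e r))
      \<le> norm (indicator {0<..} r *\<^sub>R (r ^ k * ?e r) + indicator {0<..} r *\<^sub>R (r ^ (k + 2) * ?e r))"
    proof (cases "0 < r")
      case True
      have "\<bar>r ^ Suc k * ln r\<bar> * ?e r \<le> (r ^ k + r ^ (k + 2)) * ?e r"
        by (intro mult_right_mono abs_power_mult_ln_le True) simp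
      then show ?thesis
        using True by (simp add: abs_mult algebra_simps)
    qed simp
  qed
qed measurable

lemma radial_density_expectation:
  fixes a :: real and N :: nat
  assumes a: "0 < a"
  obtains E where "\<And>L q. (LINT r:{0<..}|lborel.
      r ^ N * exp (- (r\<^sup>2 / 2) * a) / radial_moment a N * (real N * ln r - L - r\<^sup>2 / 2 * q)) =
    E - L - (real N + 1) / (2 * a) * q"
proof -
  define J where "J = radial_moment a N"
  define \<rho> where "\<rho> k r = indicator {0<..} r *\<^sub>R (r ^ k * exp (- (r\<^sup>2 / 2) * a))" for k and r :: real
  define h where "h r = indicator {0<..} r *\<^sub>R (r ^ N * ln r * exp (- (r\<^sup>2 / 2) * a))" for r :: real
  have J: "0 < J"
    using radial_moment_pos[OF a] by (simp add: J_def)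
  have log_part: "has_bochner_integral lborel (\<lambda>r. real N * h r) (real N * integral\<^sup>L lborel h)"
  proof (rule has_bochner_integral_mult_right)
    assume "real N \<noteq> 0"
    then obtain k where "N = Suc k"
      using not0_implies_Suc by fastforce
    then show "has_bochner_integral lborel h (integral\<^sup>L lborel h)"
      using integrable_radial_log_moment[OF a, of k]
      by (simp add: h_def[abs_def] has_bochner_integral_integrable)
  qed
  have radial_N: "has_bochner_integral lborel (\<rho> N) J"
    using has_bochner_integral_radial_moment[OF a] by (simp add: \<rho>_def[abs_def] J_def)
  have radial_N2: "has_bochner_integral lborel (\<rho> (N + 2)) ((real N + 1) / a * J)"
    using has_bochner_integral_radial_moment[OF a, of "N + 2"] radial_moment_add_2[OF a, of N]
    by (simp add: \<rho>_def[abs_def] J_def)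
  show thesis
  proof (rule that[of "real N * integral\<^sup>L lborel h / J"])
    fix L q :: real
    have integrand: "(\<lambda>r. indicator {0<..} r *\<^sub>R
          (r ^ N * exp (- (r\<^sup>2 / 2) * a) / J * (real N * ln r - L - r\<^sup>2 / 2 * q))) =
        (\<lambda>r. real N * h r / J - L / J * \<rho> N r - q / (2 * J) * \<rho> (N + 2) r)"
      using J by (auto simp: h_def \<rho>_def field_simps power_add power2_eq_square)
    have combination: "has_bochner_integral lborel
        (\<lambda>r. real N * h r / J - L / J * \<rho> N r - q / (2 * J) * \<rho> (N + 2) r)
        (real N * integral\<^sup>L lborel h / J - L / J * J - q / (2 * J) * ((real N + 1) / a * J))"
      by (intro log_part radial_N radial_N2 has_bochner_integral_diff has_bochner_integral_divide_zero
          has_bochner_integral_mult_right)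
    have "(LINT r:{0<..}|lborel.
        r ^ N * exp (- (r\<^sup>2 / 2) * a) / radial_moment a N * (real N * ln r - L - r\<^sup>2 / 2 * q)) =
      real N * integral\<^sup>L lborel h / J - L / J * J - q / (2 * J) * ((real N + 1) / a * J)"
      unfolding set_lebesgue_integral_def J_def[symmetric] integrand
      by (rule has_bochner_integral_integral_eq[OF combination])
    also have "\<dots> = real N * integral\<^sup>L lborel h / J - L - (real N + 1) / (2 * a) * q"
      using J a by (simp add: field_simps)
    finally show "(LINT r:{0<..}|lborel.
        r ^ N * exp (- (r\<^sup>2 / 2) * a) / radial_moment a N * (real N * ln r - L - r\<^sup>2 / 2 * q)) =
      real N * integral\<^sup>L lborel h / J - L - (real N + 1) / (2 * a) * q" .
  qed
qed

section \<open>The latent variable model\<close>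

lemma ln_lv_joint:
  fixes S :: "real^'n^'n"
  assumes S: "pos_def S" and r: "0 < r"
  shows "ln (lv_joint S x r) = real (CARD('n) - 1) * ln r
    - ln ((2 * pi) powr (real CARD('n) / 2) * sqrt (det S)) - r\<^sup>2 / 2 * (x \<bullet> (matrix_inv S *v x))"
proof -
  have "0 < (2 * pi) powr (real CARD('n) / 2) * sqrt (det S)"
    using pos_def_det_pos[OF S] by simp
  then show ?thesis
    using r pos_def_det_pos[OF S] by (simp add: lv_joint_def ln_mult ln_div ln_realpow)
qed

lemma lv_cond_eq:
  fixes Sk :: "real^'n^'n"
  assumes Sk: "pos_def Sk" and x: "x \<noteq> 0"
  defines "a \<equiv> x \<bullet> (matrix_inv Sk *v x)"
  shows "0 < a"
    and "lv_cond Sk x r =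
      r ^ (CARD('n) - 1) * exp (- (r\<^sup>2 / 2) * a) / radial_moment a (CARD('n) - 1)"
proof -
  show a: "0 < a"
    using pos_def_matrix_inv[OF Sk] x by (simp add: pos_def_def a_def)
  define N where "N = CARD('n) - 1"
  define c where "c = (2 * pi) powr (real CARD('n) / 2) * sqrt (det Sk)"
  have c: "0 < c"
    using pos_def_det_pos[OF Sk] by (simp add: c_def)
  have joint: "lv_joint Sk x t = t ^ N * exp (- (t\<^sup>2 / 2) * a) / c" for t
    by (simp add: lv_joint_def N_def c_def a_def)
  have "has_bochner_integral lborel (\<lambda>t. indicator {0<..} t *\<^sub>R lv_joint Sk x t) (radial_moment a N / c)"
    using has_bochner_integral_divide_zero[OF has_bochner_integral_radial_moment[OF a], where c = c]
    by (simp add: joint)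
  then have "(LINT t:{0<..}|lborel. lv_joint Sk x t) = radial_moment a N / c"
    unfolding set_lebesgue_integral_def by (rule has_bochner_integral_integral_eq)
  then show "lv_cond Sk x r = r ^ (CARD('n) - 1) * exp (- (r\<^sup>2 / 2) * a) / radial_moment a (CARD('n) - 1)"
    using c radial_moment_pos[OF a] by (simp add: lv_cond_def joint N_def)
qed

lemma em_summand_eq:
  fixes Sk :: "real^'n^'n" and x :: "real^'n"
  assumes Sk: "pos_def Sk" and x: "x \<noteq> 0"
  shows "\<exists>C. \<forall>S. pos_def S \<longrightarrow>
    (LINT r:{0<..}|lborel. lv_cond Sk x r * ln (lv_joint S x r)) =
      C - ln ((2 * pi) powr (real CARD('n) / 2) * sqrt (det S))
        - real CARD('n) / (2 * (x \<bullet> (matrix_inv Sk *v x))) * (x \<bullet> (matrix_inv S *v x))"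
proof -
  define a where "a = x \<bullet> (matrix_inv Sk *v x)"
  define N where "N = CARD('n) - 1"
  have a: "0 < a"
    using lv_cond_eq(1)[OF Sk x] by (simp add: a_def)
  obtain E where E: "\<And>L q. (LINT r:{0<..}|lborel.
      r ^ N * exp (- (r\<^sup>2 / 2) * a) / radial_moment a N * (real N * ln r - L - r\<^sup>2 / 2 * q)) =
    E - L - (real N + 1) / (2 * a) * q"
    using radial_density_expectation[OF a] by blast
  show ?thesis
  proof (intro exI[of _ E] allI impI)
    fix S :: "real^'n^'n"
    assume S: "pos_def S"
    have "(LINT r:{0<..}|lborel. lv_cond Sk x r * ln (lv_joint S x r)) =
      (LINT r:{0<..}|lborel. r ^ N * exp (- (r\<^sup>2 / 2) * a) / radial_moment a N *
        (real N * ln r - ln ((2 * pi) powr (real CARD('n) / 2) * sqrt (det S))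
          - r\<^sup>2 / 2 * (x \<bullet> (matrix_inv S *v x))))"
      by (intro set_lebesgue_integral_cong)
        (simp_all add: lv_cond_eq(2)[OF Sk x] ln_lv_joint[OF S] a_def N_def)
    also have "\<dots> = E - ln ((2 * pi) powr (real CARD('n) / 2) * sqrt (det S))
        - (real N + 1) / (2 * a) * (x \<bullet> (matrix_inv S *v x))"
      by (rule E)
    finally show "(LINT r:{0<..}|lborel. lv_cond Sk x r * ln (lv_joint S x r)) =
      E - ln ((2 * pi) powr (real CARD('n) / 2) * sqrt (det S))
        - real CARD('n) / (2 * (x \<bullet> (matrix_inv Sk *v x))) * (x \<bullet> (matrix_inv S *v x))"
      by (simp add: a_def N_def)
  qed
qed

lemma em_Q_eq_gaussian_nll:
  fixes x :: "nat \<Rightarrow> real^'n" and Sk :: "real^'n^'n"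
  assumes m: "0 < m" and x: "\<And>i. i < m \<Longrightarrow> x i \<noteq> 0" and Sk: "pos_def Sk"
  obtains C where
    "\<And>S. pos_def S \<Longrightarrow> em_Q x m Sk S = C - real m / 2 * gaussian_nll (tyler_step x m Sk) S"
proof -
  define K where "K = (2 * pi) powr (real CARD('n) / 2)"
  define a where "a i = x i \<bullet> (matrix_inv Sk *v x i)" for i
  have "\<forall>i\<in>{..<m}. \<exists>C. \<forall>S. pos_def S \<longrightarrow>
      (LINT r:{0<..}|lborel. lv_cond Sk (x i) r * ln (lv_joint S (x i) r)) =
        C - ln (K * sqrt (det S)) - real CARD('n) / (2 * a i) * (x i \<bullet> (matrix_inv S *v x i))"
    using em_summand_eq[OF Sk x] by (simp add: K_def a_def)
  from bchoice[OF this] obtain c where c: "\<forall>i\<in>{..<m}. \<forall>S. pos_def S \<longrightarrow>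
      (LINT r:{0<..}|lborel. lv_cond Sk (x i) r * ln (lv_joint S (x i) r)) =
        c i - ln (K * sqrt (det S)) - real CARD('n) / (2 * a i) * (x i \<bullet> (matrix_inv S *v x i))"
    by blast
  show thesis
  proof (rule that[of "(\<Sum>i<m. c i) - real m * ln K"])
    fix S :: "real^'n^'n"
    assume S: "pos_def S"
    have trace: "real m / 2 * trace (matrix_inv S ** tyler_step x m Sk) =
        (\<Sum>i<m. real CARD('n) / (2 * a i) * (x i \<bullet> (matrix_inv S *v x i)))"
      unfolding trace_mult_tyler_step sum_distrib_left
      using m by (intro sum.cong refl) (simp add: a_def)
    have "em_Q x m Sk S =
        (\<Sum>i<m. c i - ln (K * sqrt (det S)) - real CARD('n) / (2 * a i) * (x i \<bullet> (matrix_inv S *v x i)))"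
      unfolding em_Q_def using c S by (intro sum.cong) auto
    also have "\<dots> = (\<Sum>i<m. c i) - real m * ln (K * sqrt (det S))
        - real m / 2 * trace (matrix_inv S ** tyler_step x m Sk)"
      unfolding trace by (simp add: sum_subtractf)
    also have "\<dots> = (\<Sum>i<m. c i) - real m * ln K - real m / 2 * gaussian_nll (tyler_step x m Sk) S"
      using pos_def_det_pos[OF S] by (simp add: K_def gaussian_nll_def ln_mult ln_sqrt algebra_simps)
    finally show "em_Q x m Sk S =
        (\<Sum>i<m. c i) - real m * ln K - real m / 2 * gaussian_nll (tyler_step x m Sk) S" .
  qed
qed

theorem proposition1:
  fixes x :: "nat \<Rightarrow> real^'n" and m :: nat and Sk :: "real^'n^'n"
  assumes "m \<ge> 1"
    and "\<forall>i<m. norm (x i) = 1"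
    and "pos_def Sk"
  shows "\<forall>S. pos_def S \<longrightarrow> (is_em_update x m Sk S \<longleftrightarrow> S = tyler_step x m Sk)"
proof (intro allI impI)
  fix S :: "real^'n^'n"
  assume S: "pos_def S"
  let ?T = "tyler_step x m Sk"
  have m: "0 < m"
    using assms(1) by simp
  have "x i \<noteq> 0" if "i < m" for i
    using assms(2) that by auto
  then obtain C where Q: "\<And>S'. pos_def S' \<Longrightarrow> em_Q x m Sk S' = C - real m / 2 * gaussian_nll ?T S'"
    using em_Q_eq_gaussian_nll[OF m _ assms(3)] by blast
  have "is_em_update x m Sk S \<longleftrightarrow>
      (\<forall>S'. pos_def S' \<longrightarrow> gaussian_nll ?T S \<le> gaussian_nll ?T S')"
    using S m by (auto simp: is_em_update_def Q)
  also have "\<dots> \<longleftrightarrow> S = ?T"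
    using pos_semidef_tyler_step[OF assms(3)] S by (rule gaussian_nll_minimizer_iff)
  finally show "is_em_update x m Sk S \<longleftrightarrow> S = ?T" .
qed

end
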